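(* Let $\Gamma\subset\Delta^+$ be a non-empty antichain. Then there exist $H\in\mathfrak{h}$ and a positive integer $n$ such that $\alpha(H)$ is a positive integer for every $\alpha\in\Pi$ and $\gamma(H)=n$ for every $\gamma\in\Gamma$.
   Context: Let $\mathfrak{g}$ be a complex finite-dimensional semisimple Lie algebra with Cartan subalgebra $\mathfrak{h}$ contained in a Borel subalgebra $\mathfrak{b}$; $\Delta\supset\Delta^+\supset\Pi$ are the roots, positive roots and simple roots relative to $(\mathfrak{b},\mathfrak{h})$. Partial order: $\alpha\preccurlyeq\beta$ iff $\beta-\alpha$ is a nonnegative integer combination of simple roots. An antichain in $\Delta^+$ is a subset of pairwise non-comparable elements for $\preccurlyeq$. *)

theory Defs
  imports "HOL-Analysis.Analysis"
begin

text \<open>Root systems of complex semisimple Lie algebras are exactly the reduced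
crystallographic root systems, realised in the real span of the roots in the dual
of the Cartan subalgebra, modelled as a Euclidean space with the Killing form.\<close>

definition root_system :: "'a::euclidean_space set \<Rightarrow> bool" where
  "root_system R \<longleftrightarrow>
     finite R \<and> 0 \<notin> R \<and> span R = UNIV \<and>
     (\<forall>\<alpha>\<in>R. \<forall>\<beta>\<in>R. \<beta> - (2 * (\<beta> \<bullet> \<alpha>) / (\<alpha> \<bullet> \<alpha>)) *\<^sub>R \<alpha> \<in> R) \<and>
     (\<forall>\<alpha>\<in>R. \<forall>\<beta>\<in>R. 2 * (\<beta> \<bullet> \<alpha>) / (\<alpha> \<bullet> \<alpha>) \<in> \<int>) \<and>
     (\<forall>\<alpha>\<in>R. \<forall>c::real. c *\<^sub>R \<alpha> \<in> R \<longrightarrow> c = 1 \<or> c = -1)"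

definition is_base :: "'a::euclidean_space set \<Rightarrow> 'a set \<Rightarrow> bool" where
  "is_base R P \<longleftrightarrow> P \<subseteq> R \<and> independent P \<and>
     (\<forall>\<beta>\<in>R. \<exists>c::'a \<Rightarrow> int. \<beta> = (\<Sum>\<alpha>\<in>P. of_int (c \<alpha>) *\<^sub>R \<alpha>) \<and>
        ((\<forall>\<alpha>\<in>P. c \<alpha> \<ge> 0) \<or> (\<forall>\<alpha>\<in>P. c \<alpha> \<le> 0)))"

definition nat_comb :: "'a::euclidean_space set \<Rightarrow> 'a \<Rightarrow> bool" where
  "nat_comb P v \<longleftrightarrow> (\<exists>c::'a \<Rightarrow> nat. v = (\<Sum>\<alpha>\<in>P. of_nat (c \<alpha>) *\<^sub>R \<alpha>))"

definition pos_roots :: "'a::euclidean_space set \<Rightarrow> 'a set \<Rightarrow> 'a set" where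
  "pos_roots R P = {\<beta>\<in>R. nat_comb P \<beta>}"

definition root_le :: "'a::euclidean_space set \<Rightarrow> 'a \<Rightarrow> 'a \<Rightarrow> bool" where
  "root_le P \<alpha> \<beta> \<longleftrightarrow> nat_comb P (\<beta> - \<alpha>)"

definition antichain :: "'a::euclidean_space set \<Rightarrow> 'a set \<Rightarrow> 'a set \<Rightarrow> bool" where
  "antichain R P \<Gamma> \<longleftrightarrow> \<Gamma> \<subseteq> pos_roots R P \<and>
     (\<forall>\<alpha>\<in>\<Gamma>. \<forall>\<beta>\<in>\<Gamma>. root_le P \<alpha> \<beta> \<longrightarrow> \<alpha> = \<beta>)"

end

(* Since the simple roots form a basis, H is determined by its values on them, and we need a
   lattice point of the open cone where all simple roots are positive at which all elements of
   \<Gamma> take the same value. By a separating hyperplane argument a real such point exists unless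
   some \<Sigma> z_\<gamma> \<gamma> with \<Sigma> z_\<gamma> = 0 is a nonzero nonnegative combination of simple roots, and since
   all data are rational, real solutions and real obstructions can both be replaced by integral
   ones.

   An integral obstruction is an identity \<Sigma>B = \<Sigma>A + \<Sigma>V of multisets with A, B drawn from \<Gamma>,
   V from the simple roots, |A| = |B| and V \<noteq> \<emptyset>. Letting B range over the lower ideal generated
   by \<Gamma> and V over the positive roots, we show |A| + [V \<noteq> \<emptyset>] \<le> |B| by descent on |A| + |B| + |V|:
   as |\<Sigma>B|\<^sup>2 = \<Sigma>B \<bullet> (\<Sigma>A + \<Sigma>V), some \<delta> \<in> B has positive inner product with some \<gamma> \<in> A or \<beta> \<in> V.
   The difference of two roots with positive inner product is a root, so \<delta> can be cancelled
   against \<gamma> or \<beta> or replaced by a smaller root; because \<Gamma> is an antichain, \<gamma> - \<delta> rather than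
   \<delta> - \<gamma> is then a positive root, and the invariants are preserved. *)

theory Submission
  imports Defs "HOL-Library.Multiset"
begin

lemma inner_sum_mset_right:
  fixes x :: "'a::real_inner"
  shows "x \<bullet> sum_mset Y = (\<Sum>y\<in>#Y. x \<bullet> y)"
  by (induction Y) (simp_all add: inner_add_right)

lemma inner_sum_mset_sum_mset:
  fixes X Y :: "'a::real_inner multiset"
  shows "sum_mset X \<bullet> sum_mset Y = (\<Sum>x\<in>#X. \<Sum>y\<in>#Y. x \<bullet> y)"
  by (induction X) (simp_all add: inner_add_left inner_sum_mset_right sum_mset.distrib)

lemma exists_inner_pos_if_sum_mset_eq:
  fixes X Y :: "'a::real_inner multiset"
  assumes "sum_mset X = sum_mset Y" and "sum_mset X \<noteq> 0"
  shows "\<exists>x\<in>#X. \<exists>y\<in>#Y. 0 < x \<bullet> y"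
proof (rule ccontr)
  assume "\<not> ?thesis"
  then have "(\<Sum>x\<in>#X. \<Sum>y\<in>#Y. x \<bullet> y) \<le> (\<Sum>x\<in>#X. \<Sum>y\<in>#Y. 0)"
    by (intro sum_mset_mono) (auto simp: not_less)
  then have "sum_mset X \<bullet> sum_mset Y \<le> 0"
    by (simp add: inner_sum_mset_sum_mset)
  with assms show False
    by (metis inner_gt_zero_iff not_le)
qed

lemma set_mset_sum_replicate_mset: "set_mset (\<Sum>x\<in>S. replicate_mset (n x) x) \<subseteq> S"
  by (induction S rule: infinite_finite_induct) auto

lemma size_sum_replicate_mset: "size (\<Sum>x\<in>S. replicate_mset (n x) x) = (\<Sum>x\<in>S. n x)"
  by (induction S rule: infinite_finite_induct) auto

lemma sum_mset_replicate_mset_scaleR: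
  "sum_mset (replicate_mset n x) = of_nat n *\<^sub>R (x::'a::real_vector)"
  by (induction n) (simp_all add: scaleR_add_left)

lemma sum_mset_sum_replicate_mset:
  fixes S :: "'a::real_vector set"
  shows "sum_mset (\<Sum>x\<in>S. replicate_mset (n x) x) = (\<Sum>x\<in>S. of_nat (n x) *\<^sub>R x)"
  by (induction S rule: infinite_finite_induct) (simp_all add: sum_mset_replicate_mset_scaleR)

lemma exists_inner_eq_on_independent:
  fixes B :: "'a::euclidean_space set"
  assumes "independent B"
  shows "\<exists>h. \<forall>b\<in>B. b \<bullet> h = t b"
proof -
  obtain g where g: "linear g" "\<forall>b\<in>B. g b = t b"
    using linear_independent_extend[OF assms] by blast
  define h where "h = (\<Sum>e\<in>Basis. g e *\<^sub>R e)"
  have "x \<bullet> h = g x" for x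
  proof -
    have "x \<bullet> h = (\<Sum>e\<in>Basis. (x \<bullet> e) * g e)"
      by (simp add: h_def inner_sum_right mult.commute)
    also have "\<dots> = g (\<Sum>e\<in>Basis. (x \<bullet> e) *\<^sub>R e)"
      by (simp add: linear_sum[OF g(1)] linear_scale[OF g(1)])
    also have "\<dots> = g x"
      by (simp add: euclidean_representation)
    finally show ?thesis .
  qed
  then show ?thesis
    using g(2) by (intro exI[of _ h]) simp
qed

lemma scaleR_sum_eq_imp_eq_on_independent:
  fixes B :: "'a::real_vector set"
  assumes "independent B" "finite B" "(\<Sum>b\<in>B. u b *\<^sub>R b) = (\<Sum>b\<in>B. v b *\<^sub>R b)" "b \<in> B"
  shows "u b = v b"
proof -
  have "(\<Sum>b\<in>B. (u b - v b) *\<^sub>R b) = 0"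
    using assms(3) by (simp add: scaleR_diff_left sum_subtractf)
  moreover have "\<forall>w. (\<Sum>b\<in>B. w b *\<^sub>R b) = 0 \<longrightarrow> (\<forall>b\<in>B. w b = 0)"
    using assms(1,2) dependent_finite by blast
  ultimately show ?thesis
    using assms(4) by auto
qed

lemma subspace_zero_sum_combinations:
  "subspace {\<Sum>x\<in>S. z x *\<^sub>R x | z. (\<Sum>x\<in>S. z x) = 0}"
  unfolding subspace_def
proof (intro conjI ballI allI)
  show "0 \<in> {\<Sum>x\<in>S. z x *\<^sub>R x | z. (\<Sum>x\<in>S. z x) = 0}"
    by (intro CollectI exI[of _ "\<lambda>_. 0"]) simp
next
  fix u v
  assume "u \<in> {\<Sum>x\<in>S. z x *\<^sub>R x | z. (\<Sum>x\<in>S. z x) = 0}" "v \<in> {\<Sum>x\<in>S. z x *\<^sub>R x | z. (\<Sum>x\<in>S. z x) = 0}"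
  then obtain zu zv where "u = (\<Sum>x\<in>S. zu x *\<^sub>R x)" "(\<Sum>x\<in>S. zu x) = 0"
    "v = (\<Sum>x\<in>S. zv x *\<^sub>R x)" "(\<Sum>x\<in>S. zv x) = 0"
    by blast
  then show "u + v \<in> {\<Sum>x\<in>S. z x *\<^sub>R x | z. (\<Sum>x\<in>S. z x) = 0}"
    by (intro CollectI exI[of _ "\<lambda>x. zu x + zv x"]) (simp add: sum.distrib scaleR_add_left)
next
  fix c :: real and u
  assume "u \<in> {\<Sum>x\<in>S. z x *\<^sub>R x | z. (\<Sum>x\<in>S. z x) = 0}"
  then obtain zu where "u = (\<Sum>x\<in>S. zu x *\<^sub>R x)" "(\<Sum>x\<in>S. zu x) = 0"
    by blast
  then show "c *\<^sub>R u \<in> {\<Sum>x\<in>S. z x *\<^sub>R x | z. (\<Sum>x\<in>S. z x) = 0}"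
    by (intro CollectI exI[of _ "\<lambda>x. c * zu x"])
      (simp add: scaleR_sum_right sum_distrib_left[symmetric])
qed

lemma sum_of_bool_eq_scaleR:
  fixes S :: "'a::real_vector set"
  assumes "finite S" "x \<in> S"
  shows "(\<Sum>v\<in>S. of_bool (v = x) *\<^sub>R v) = x"
proof -
  have "(\<Sum>v\<in>S. of_bool (v = x) *\<^sub>R v) = (\<Sum>v\<in>S. if v = x then x else 0)"
    by (intro sum.cong) auto
  with assms show ?thesis
    by (simp add: sum.delta)
qed

lemma diff_mem_zero_sum_combinations:
  fixes S :: "'a::real_vector set"
  assumes "finite S" "x \<in> S" "y \<in> S"
  shows "x - y \<in> {\<Sum>v\<in>S. z v *\<^sub>R v | z. (\<Sum>v\<in>S. z v) = 0}"
proof -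
  let ?z = "\<lambda>v. of_bool (v = x) - of_bool (v = y) :: real"
  have "(\<Sum>v\<in>S. ?z v *\<^sub>R v) = x - y"
    using assms by (simp add: scaleR_diff_left sum_subtractf sum_of_bool_eq_scaleR)
  moreover have "(\<Sum>v\<in>S. ?z v) = 0"
    using assms by (simp add: sum_subtractf of_bool_def sum.delta)
  ultimately show ?thesis
    by (intro CollectI exI[of _ ?z]) simp
qed

lemma sum_of_bool_mult:
  fixes f :: "'a \<Rightarrow> real"
  assumes "finite S" "x \<in> S"
  shows "(\<Sum>y\<in>S. of_bool (y = x) * f y) = f x"
proof -
  have "(\<Sum>y\<in>S. of_bool (y = x) * f y) = (\<Sum>y\<in>S. if y = x then f x else 0)"
    by (intro sum.cong) auto
  with assms show ?thesis
    by (simp add: sum.delta)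
qed

lemma separating_functional_compact_subspace:
  fixes K W :: "'a::euclidean_space set"
  assumes "convex K" "compact K" "K \<noteq> {}" "subspace W" "K \<inter> W = {}"
  shows "\<exists>a. (\<forall>x\<in>K. 0 < a \<bullet> x) \<and> (\<forall>w\<in>W. a \<bullet> w = 0)"
proof -
  obtain a b where a_K: "\<forall>x\<in>K. a \<bullet> x < b" and a_W: "\<forall>x\<in>W. b < a \<bullet> x"
    using separating_hyperplane_compact_closed[OF assms(1-3) subspace_imp_convex[OF assms(4)]
        closed_subspace[OF assms(4)] assms(5)]
    by blast
  have "b < 0"
    using a_W subspace_0[OF assms(4)] by fastforce
  have a_W_zero: "a \<bullet> w = 0" if "w \<in> W" for w
  proof (rule ccontr)
    assume "a \<bullet> w \<noteq> 0"
    then have "a \<bullet> ((b / (a \<bullet> w)) *\<^sub>R w) = b"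
      by simp
    moreover have "(b / (a \<bullet> w)) *\<^sub>R w \<in> W"
      using assms(4) that by (rule subspace_scale)
    ultimately show False
      using a_W by fastforce
  qed
  show ?thesis
    using a_K \<open>b < 0\<close> a_W_zero by (intro exI[of _ "- a"]) fastforce
qed

lemma int_mult_le_four_cases:
  fixes m n :: int
  assumes "0 < m" "0 < n" "m * n \<le> 4"
  shows "m = 1 \<or> n = 1 \<or> (m = 2 \<and> n = 2)"
proof (rule ccontr)
  assume contra: "\<not> ?thesis"
  with assms(1,2) have "2 \<le> m" "2 \<le> n"
    by auto
  moreover from this have "2 * n \<le> m * n" "m * 2 \<le> m * n"
    using assms(1,2) by (simp_all add: mult_right_mono mult_left_mono)
  ultimately show False
    using assms(3) contra by linarith
qed

section \<open>Rational and integral solutions of linear systems\<close>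

definition affine_value :: "'i set \<Rightarrow> ('i \<Rightarrow> real) \<times> real \<Rightarrow> ('i \<Rightarrow> real) \<Rightarrow> real" where
  "affine_value I p x = (\<Sum>i\<in>I. fst p i * x i) + snd p"

definition solves_system ::
    "'i set \<Rightarrow> (('i \<Rightarrow> real) \<times> real) set \<Rightarrow> (('i \<Rightarrow> real) \<times> real) set \<Rightarrow> ('i \<Rightarrow> real) \<Rightarrow> bool" where
  "solves_system I E G x \<longleftrightarrow> (\<forall>p\<in>E. affine_value I p x = 0) \<and> (\<forall>p\<in>G. 0 < affine_value I p x)"

definition rational_constraints :: "(('i \<Rightarrow> real) \<times> real) set \<Rightarrow> bool" where
  "rational_constraints S \<longleftrightarrow> (\<forall>p\<in>S. (\<forall>i. fst p i \<in> \<rat>) \<and> snd p \<in> \<rat>)"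

lemma affine_value_cong: "(\<And>i. i \<in> I \<Longrightarrow> x i = y i) \<Longrightarrow> affine_value I p x = affine_value I p y"
  unfolding affine_value_def by (auto intro!: sum.cong)

lemma solves_system_cong:
  assumes "\<And>i. i \<in> I \<Longrightarrow> x i = y i"
  shows "solves_system I E G x \<longleftrightarrow> solves_system I E G y"
proof -
  have "affine_value I p x = affine_value I p y" for p
    using assms by (rule affine_value_cong)
  then show ?thesis
    by (simp add: solves_system_def)
qed

definition eliminate :: "'i \<Rightarrow> ('i \<Rightarrow> real) \<times> real \<Rightarrow> ('i \<Rightarrow> real) \<times> real \<Rightarrow> ('i \<Rightarrow> real) \<times> real" where
  "eliminate i e p =
    (\<lambda>j. fst p j - fst p i / fst e i * fst e j, snd p - fst p i / fst e i * snd e)"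

lemma affine_value_eliminate:
  assumes "finite I" "i \<notin> I" "fst e i \<noteq> 0" "affine_value (insert i I) e y = 0"
  shows "affine_value (insert i I) p y = affine_value I (eliminate i e p) y"
proof -
  define k where "k = fst p i / fst e i"
  have "affine_value I (eliminate i e p) y = affine_value I p y - k * affine_value I e y"
    by (simp add: affine_value_def eliminate_def k_def algebra_simps sum_subtractf sum_distrib_left)
  also have "affine_value I e y = - (fst e i * y i)"
    using assms(1,2,4) by (simp add: affine_value_def)
  also have "k * - (fst e i * y i) = - (fst p i * y i)"
    using assms(3) by (simp add: k_def)
  finally show ?thesis
    using assms(1,2) by (simp add: affine_value_def)
qed

lemma solves_system_eliminate:
  assumes "finite I" "i \<notin> I" "fst e i \<noteq> 0" "affine_value (insert i I) e y = 0"
  shows "solves_system (insert i I) E G y \<longleftrightarrow>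
    solves_system I (eliminate i e ` E) (eliminate i e ` G) y"
  by (simp add: solves_system_def affine_value_eliminate[OF assms])

lemma rational_constraints_eliminate:
  assumes "rational_constraints S" "(\<forall>j. fst e j \<in> \<rat>)" "snd e \<in> \<rat>"
  shows "rational_constraints (eliminate i e ` S)"
  using assms by (simp add: rational_constraints_def eliminate_def)

definition fix_variable :: "'i \<Rightarrow> real \<Rightarrow> ('i \<Rightarrow> real) \<times> real \<Rightarrow> ('i \<Rightarrow> real) \<times> real" where
  "fix_variable i r p = (fst p, snd p + fst p i * r)"

lemma affine_value_fix_variable:
  assumes "finite I" "i \<notin> I"
  shows "affine_value (insert i I) p y = affine_value I (fix_variable i (y i) p) y"
  using assms by (simp add: affine_value_def fix_variable_def)

lemma solves_system_fix_variable:
  assumes "finite I" "i \<notin> I" "\<forall>p\<in>E. fst p i = 0"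
  shows "solves_system (insert i I) E G y \<longleftrightarrow>
    solves_system I E (fix_variable i (y i) ` G) y"
proof -
  have "fix_variable i (y i) p = p" if "p \<in> E" for p
    using assms(3) that by (simp add: fix_variable_def)
  then show ?thesis
    using affine_value_fix_variable[OF assms(1,2)] by (simp add: solves_system_def)
qed

lemma rational_constraints_fix_variable:
  assumes "rational_constraints S" "r \<in> \<rat>"
  shows "rational_constraints (fix_variable i r ` S)"
  using assms by (simp add: rational_constraints_def fix_variable_def)

lemma exists_rational_if_eventually_nhds:
  fixes x :: real
  assumes "\<forall>\<^sub>F r in nhds x. P r"
  shows "\<exists>r\<in>\<rat>. P r"
proof -
  obtain S where S: "open S" "x \<in> S" "\<forall>r\<in>S. P r"
    using assms by (auto simp: eventually_nhds)
  then have "S \<inter> \<rat> \<noteq> {}"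
    using open_Int_closure_eq_empty[of S \<rat>] by (auto simp: Rats_closure_real)
  then show ?thesis
    using S(3) by auto
qed

lemma exists_rational_value_of_free_variable:
  assumes "finite I" "i \<notin> I" "\<forall>p\<in>E. fst p i = 0" "finite G"
    and "solves_system (insert i I) E G x"
  shows "\<exists>r\<in>\<rat>. solves_system I E (fix_variable i r ` G) x"
proof -
  have x: "solves_system I E (fix_variable i (x i) ` G) x"
    using solves_system_fix_variable[OF assms(1-3)] assms(5) by blast
  have "\<forall>\<^sub>F r in nhds (x i). \<forall>p\<in>G. 0 < affine_value I (fix_variable i r p) x"
  proof (intro eventually_ball_finite ballI)
    fix p
    assume "p \<in> G"
    have "((\<lambda>r. affine_value I (fix_variable i r p) x) \<longlongrightarrow> affine_value I (fix_variable i (x i) p) x)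
        (nhds (x i))"
      unfolding affine_value_def fix_variable_def fst_conv snd_conv
      by (intro tendsto_intros filterlim_ident)
    moreover have "0 < affine_value I (fix_variable i (x i) p) x"
      using x \<open>p \<in> G\<close> by (simp add: solves_system_def)
    ultimately show "\<forall>\<^sub>F r in nhds (x i). 0 < affine_value I (fix_variable i r p) x"
      by (rule order_tendstoD(1))
  qed (use assms(4) in simp)
  then obtain r where "r \<in> \<rat>" "\<forall>p\<in>G. 0 < affine_value I (fix_variable i r p) x"
    using exists_rational_if_eventually_nhds by blast
  with x show ?thesis
    by (intro bexI[of _ r]) (simp_all add: solves_system_def)
qed

lemma extend_solution_eliminate:
  assumes "finite I" "i \<notin> I" "fst e i \<noteq> 0" "\<forall>j. fst e j \<in> \<rat>" "snd e \<in> \<rat>"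
    and "q ` I \<subseteq> \<rat>" "solves_system I (eliminate i e ` E) (eliminate i e ` G) q"
  shows "\<exists>q'. q' ` insert i I \<subseteq> \<rat> \<and> solves_system (insert i I) E G q'"
proof -
  define q' where "q' = q(i := - affine_value I e q / fst e i)"
  have q'_I: "q' j = q j" if "j \<in> I" for j
    using assms(2) that by (auto simp: q'_def)
  then have "affine_value (insert i I) e q' = 0"
    using assms(1-3) affine_value_cong[of I q' q] by (simp add: affine_value_def q'_def)
  then have "solves_system (insert i I) E G q'"
    using solves_system_eliminate[OF assms(1-3)] solves_system_cong[of I q' q] q'_I assms(7)
    by simp
  moreover have "q' ` insert i I \<subseteq> \<rat>"
    using assms(4-6) q'_I
    by (auto simp: q'_def affine_value_def
        intro!: Rats_divide Rats_diff Rats_minus_iff[THEN iffD2] Rats_sum Rats_mult)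
  ultimately show ?thesis
    by blast
qed

lemma extend_solution_fix_variable:
  assumes "finite I" "i \<notin> I" "\<forall>p\<in>E. fst p i = 0" "r \<in> \<rat>"
    and "q ` I \<subseteq> \<rat>" "solves_system I E (fix_variable i r ` G) q"
  shows "\<exists>q'. q' ` insert i I \<subseteq> \<rat> \<and> solves_system (insert i I) E G q'"
proof -
  have "solves_system I E (fix_variable i r ` G) (q(i := r)) \<longleftrightarrow>
      solves_system I E (fix_variable i r ` G) q"
    using assms(2) by (intro solves_system_cong) auto
  with assms(6) have "solves_system (insert i I) E G (q(i := r))"
    using solves_system_fix_variable[OF assms(1-3)] by simp
  moreover have "q(i := r) ` insert i I \<subseteq> \<rat>"
    using assms(2,4,5) by auto
  ultimately show ?thesis
    by blast
qed

theorem rational_solution: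
  assumes "finite I" "finite G" "rational_constraints E" "rational_constraints G"
    and "solves_system I E G x"
  shows "\<exists>q. q ` I \<subseteq> \<rat> \<and> solves_system I E G q"
  using assms
proof (induction I arbitrary: E G x rule: finite_induct)
  case empty
  then show ?case
    by blast
next
  case (insert i I)
  show ?case
  proof (cases "\<exists>e\<in>E. fst e i \<noteq> 0")
    case True
    then obtain e where e: "e \<in> E" "fst e i \<noteq> 0"
      by blast
    have e_rat: "\<forall>j. fst e j \<in> \<rat>" "snd e \<in> \<rat>"
      using insert.prems(2) e(1) by (simp_all add: rational_constraints_def)
    have "affine_value (insert i I) e x = 0"
      using insert.prems(4) e(1) by (simp add: solves_system_def)
    then have "solves_system I (eliminate i e ` E) (eliminate i e ` G) x"
      using solves_system_eliminate[OF insert.hyps(1,2) e(2)] insert.prems(4) by blast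
    moreover have "rational_constraints (eliminate i e ` S)" if "rational_constraints S" for S
      using rational_constraints_eliminate[OF that e_rat] .
    ultimately obtain q
      where "q ` I \<subseteq> \<rat>" "solves_system I (eliminate i e ` E) (eliminate i e ` G) q"
      using insert.IH[of "eliminate i e ` G" "eliminate i e ` E" x] insert.prems(1-3) by blast
    then show ?thesis
      using extend_solution_eliminate[OF insert.hyps(1,2) e(2) e_rat] by blast
  next
    case False
    then have free: "\<forall>p\<in>E. fst p i = 0"
      by blast
    obtain r where r: "r \<in> \<rat>" "solves_system I E (fix_variable i r ` G) x"
      using exists_rational_value_of_free_variable[OF insert.hyps(1,2) free insert.prems(1,4)]
      by blast
    have "finite (fix_variable i r ` G)" "rational_constraints (fix_variable i r ` G)"
      using insert.prems(1) rational_constraints_fix_variable[OF insert.prems(3) r(1)] by simp_all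
    then obtain q where "q ` I \<subseteq> \<rat>" "solves_system I E (fix_variable i r ` G) q"
      using insert.IH[OF _ insert.prems(2) _ r(2)] by blast
    then show ?thesis
      using extend_solution_fix_variable[OF insert.hyps(1,2) free r(1)] by blast
  qed
qed

lemma common_denominator:
  assumes "finite I" "q ` I \<subseteq> \<rat>"
  shows "\<exists>D::nat. 0 < D \<and> (\<forall>i\<in>I. real D * q i \<in> \<int>)"
  using assms
proof (induction I rule: finite_induct)
  case empty
  then show ?case
    by (intro exI[of _ 1]) simp
next
  case (insert i I)
  then obtain D where D: "0 < D" "\<forall>j\<in>I. real D * q j \<in> \<int>"
    by auto
  obtain a b where ab: "0 < b" "q i = of_int a / of_int b"
    using insert.prems Rats_cases' by (metis image_insert insert_subset)
  have "real (D * nat b) * q j \<in> \<int>" if "j \<in> insert i I" for j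
  proof (cases "j = i")
    case True
    then show ?thesis
      using ab by simp
  next
    case False
    have "real (D * nat b) * q j = of_int b * (real D * q j)"
      using ab(1) by simp
    also have "\<dots> \<in> \<int>"
      using D(2) that False by simp
    finally show ?thesis .
  qed
  then show ?case
    using D(1) ab(1) by (intro exI[of _ "D * nat b"]) simp
qed

theorem integer_solution:
  fixes E G :: "('i \<Rightarrow> real) set"
  assumes "finite I" "finite G" "\<forall>f\<in>E \<union> G. \<forall>i. f i \<in> \<rat>"
    and "\<forall>f\<in>E. (\<Sum>i\<in>I. f i * x i) = 0" "\<forall>g\<in>G. 0 < (\<Sum>i\<in>I. g i * x i)"
  shows "\<exists>z::'i \<Rightarrow> int.
    (\<forall>f\<in>E. (\<Sum>i\<in>I. f i * of_int (z i)) = 0) \<and> (\<forall>g\<in>G. 0 < (\<Sum>i\<in>I. g i * of_int (z i)))"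
proof -
  let ?homogeneous = "\<lambda>S. (\<lambda>f. (f, 0::real)) ` S"
  have "finite (?homogeneous G)" "rational_constraints (?homogeneous E)"
    "rational_constraints (?homogeneous G)" "solves_system I (?homogeneous E) (?homogeneous G) x"
    using assms(2-5) by (simp_all add: rational_constraints_def solves_system_def affine_value_def)
  then obtain q where q: "q ` I \<subseteq> \<rat>" "solves_system I (?homogeneous E) (?homogeneous G) q"
    using rational_solution[OF assms(1)] by blast
  then have q_E: "\<forall>f\<in>E. (\<Sum>i\<in>I. f i * q i) = 0" and q_G: "\<forall>g\<in>G. 0 < (\<Sum>i\<in>I. g i * q i)"
    by (simp_all add: solves_system_def affine_value_def)
  obtain D :: nat where D: "0 < D" "\<forall>i\<in>I. real D * q i \<in> \<int>"
    using common_denominator[OF assms(1) q(1)] by blast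
  then have "\<forall>i\<in>I. \<exists>m. real D * q i = of_int m"
    by (metis Ints_cases)
  then obtain z where z: "\<forall>i\<in>I. real D * q i = of_int (z i)"
    by metis
  have scaled: "(\<Sum>i\<in>I. f i * of_int (z i)) = real D * (\<Sum>i\<in>I. f i * q i)" for f
  proof -
    have "(\<Sum>i\<in>I. f i * of_int (z i)) = (\<Sum>i\<in>I. real D * (f i * q i))"
      using z by (intro sum.cong refl) (metis mult.left_commute)
    then show ?thesis
      by (simp add: sum_distrib_left)
  qed
  show ?thesis
    using q_E q_G D(1) by (intro exI[of _ z]) (simp add: scaled)
qed

theorem integer_solution_same_sign:
  fixes F :: "('i \<Rightarrow> real) set"
  assumes "finite I" "finite F" "\<forall>f\<in>F. \<forall>i. f i \<in> \<rat>"
  shows "\<exists>z::'i \<Rightarrow> int. \<forall>f\<in>F. sgn (\<Sum>i\<in>I. f i * of_int (z i)) = sgn (\<Sum>i\<in>I. f i * x i)"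
proof -
  define v where "v f = (\<Sum>i\<in>I. f i * x i)" for f
  define E where "E = {f\<in>F. v f = 0}"
  define G where "G = (\<lambda>f i. sgn (v f) * f i) ` {f\<in>F. v f \<noteq> 0}"
  have "finite G"
    using assms(2) by (simp add: G_def)
  moreover have "\<forall>f\<in>E \<union> G. \<forall>i. f i \<in> \<rat>"
    using assms(3) by (auto simp: E_def G_def sgn_if)
  moreover have "\<forall>f\<in>E. (\<Sum>i\<in>I. f i * x i) = 0"
    by (simp add: E_def v_def)
  moreover have "\<forall>g\<in>G. 0 < (\<Sum>i\<in>I. g i * x i)"
  proof
    fix g
    assume "g \<in> G"
    then obtain f where "v f \<noteq> 0" "g = (\<lambda>i. sgn (v f) * f i)"
      by (auto simp: G_def)
    then show "0 < (\<Sum>i\<in>I. g i * x i)"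
      by (auto simp: v_def sgn_if sum_distrib_left[symmetric] mult.assoc)
  qed
  ultimately obtain z :: "'i \<Rightarrow> int"
    where zE: "\<forall>f\<in>E. (\<Sum>i\<in>I. f i * of_int (z i)) = 0"
      and zG: "\<forall>g\<in>G. 0 < (\<Sum>i\<in>I. g i * of_int (z i))"
    using integer_solution[OF assms(1)] by blast
  have "sgn (\<Sum>i\<in>I. f i * of_int (z i)) = sgn (v f)" if "f \<in> F" for f
  proof (cases "v f = 0")
    case True
    with that zE show ?thesis
      by (simp add: E_def)
  next
    case False
    with that have "(\<lambda>i. sgn (v f) * f i) \<in> G"
      by (auto simp: G_def)
    from bspec[OF zG this] have "0 < sgn (v f) * (\<Sum>i\<in>I. f i * of_int (z i))"
      by (simp add: sum_distrib_left mult.assoc)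
    with False show ?thesis
      by (auto simp: sgn_if zero_less_mult_iff split: if_splits)
  qed
  then show ?thesis
    by (auto simp: v_def)
qed

section \<open>Root systems with a base\<close>

lemma nat_comb_zero: "nat_comb P 0"
  unfolding nat_comb_def by (intro exI[of _ "\<lambda>_. 0"]) simp

lemma nat_comb_add:
  assumes "nat_comb P u" "nat_comb P v"
  shows "nat_comb P (u + v)"
proof -
  obtain a b where "u = (\<Sum>\<alpha>\<in>P. of_nat (a \<alpha>) *\<^sub>R \<alpha>)" "v = (\<Sum>\<alpha>\<in>P. of_nat (b \<alpha>) *\<^sub>R \<alpha>)"
    using assms by (auto simp: nat_comb_def)
  then have "u + v = (\<Sum>\<alpha>\<in>P. of_nat (a \<alpha> + b \<alpha>) *\<^sub>R \<alpha>)"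
    by (simp add: scaleR_add_left sum.distrib)
  then show ?thesis
    unfolding nat_comb_def by (intro exI[of _ "\<lambda>\<alpha>. a \<alpha> + b \<alpha>"])
qed

lemma nat_comb_mem:
  assumes "finite P" "\<alpha> \<in> P"
  shows "nat_comb P \<alpha>"
  using sum_of_bool_eq_scaleR[OF assms] unfolding nat_comb_def
  by (intro exI[of _ "\<lambda>\<beta>. of_bool (\<beta> = \<alpha>)"]) simp

lemma inner_nonneg_if_nat_comb:
  assumes "nat_comb P v" "\<And>\<alpha>. \<alpha> \<in> P \<Longrightarrow> 0 \<le> \<alpha> \<bullet> h"
  shows "0 \<le> v \<bullet> h"
  using assms by (auto simp: nat_comb_def inner_sum_left intro!: sum_nonneg)

lemma inner_ge_one_if_nat_comb:
  assumes "finite P" "nat_comb P v" "v \<noteq> 0" "\<And>\<alpha>. \<alpha> \<in> P \<Longrightarrow> 1 \<le> \<alpha> \<bullet> h"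
  shows "1 \<le> v \<bullet> h"
proof -
  obtain c where c: "v = (\<Sum>\<alpha>\<in>P. of_nat (c \<alpha>) *\<^sub>R \<alpha>)"
    using assms(2) by (auto simp: nat_comb_def)
  have "\<exists>\<alpha>\<in>P. c \<alpha> \<noteq> 0"
  proof (rule ccontr)
    assume "\<not> ?thesis"
    then have "v = 0"
      using c by simp
    with assms(3) show False
      by simp
  qed
  then obtain \<alpha> where \<alpha>: "\<alpha> \<in> P" "c \<alpha> \<noteq> 0"
    by blast
  have "1 \<le> of_nat (c \<alpha>) * (\<alpha> \<bullet> h)"
    using mult_mono[of 1 "of_nat (c \<alpha>)" 1 "\<alpha> \<bullet> h"] \<alpha> assms(4)[OF \<alpha>(1)] by simp
  also have "\<dots> \<le> (\<Sum>\<beta>\<in>P. of_nat (c \<beta>) * (\<beta> \<bullet> h))"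
    using assms(1,4) \<alpha>(1)
    by (intro member_le_sum) (auto intro!: mult_nonneg_nonneg intro: order_trans[OF zero_le_one])
  also have "\<dots> = v \<bullet> h"
    by (simp add: c inner_sum_left)
  finally show ?thesis .
qed

locale based_root_system =
  fixes R P :: "'a::euclidean_space set"
  assumes root_system: "root_system R" and base: "is_base R P"
begin

lemma finite_roots: "finite R"
  and zero_not_root: "0 \<notin> R"
  and reflection_mem_roots: "\<And>\<alpha> \<beta>. \<alpha> \<in> R \<Longrightarrow> \<beta> \<in> R \<Longrightarrow> \<beta> - (2 * (\<beta> \<bullet> \<alpha>) / (\<alpha> \<bullet> \<alpha>)) *\<^sub>R \<alpha> \<in> R"
  and cartan_integer: "\<And>\<alpha> \<beta>. \<alpha> \<in> R \<Longrightarrow> \<beta> \<in> R \<Longrightarrow> 2 * (\<beta> \<bullet> \<alpha>) / (\<alpha> \<bullet> \<alpha>) \<in> \<int>"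
  using root_system unfolding root_system_def by auto

lemma simple_roots_subset: "P \<subseteq> R"
  and independent_simple_roots: "independent P"
  and root_coeffs_same_sign: "\<And>\<beta>. \<beta> \<in> R \<Longrightarrow> \<exists>c::'a \<Rightarrow> int. \<beta> = (\<Sum>\<alpha>\<in>P. of_int (c \<alpha>) *\<^sub>R \<alpha>) \<and>
        ((\<forall>\<alpha>\<in>P. 0 \<le> c \<alpha>) \<or> (\<forall>\<alpha>\<in>P. c \<alpha> \<le> 0))"
  using base unfolding is_base_def by auto

lemma finite_simple_roots: "finite P"
  using finite_roots simple_roots_subset by (rule finite_subset[rotated])

lemma uminus_mem_roots:
  assumes "\<alpha> \<in> R"
  shows "- \<alpha> \<in> R"
proof -
  have "\<alpha> \<bullet> \<alpha> \<noteq> 0"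
    using assms zero_not_root by auto
  then have "\<alpha> - (2 * (\<alpha> \<bullet> \<alpha>) / (\<alpha> \<bullet> \<alpha>)) *\<^sub>R \<alpha> = - \<alpha>"
    by (simp add: scaleR_2)
  then show ?thesis
    using reflection_mem_roots[OF assms assms] by simp
qed

lemma cartan_integer_eq_one_if_inner_pos:
  assumes \<alpha>: "\<alpha> \<in> R" and \<beta>: "\<beta> \<in> R" and pos: "0 < \<alpha> \<bullet> \<beta>" and "\<alpha> \<noteq> \<beta>"
  shows "2 * (\<alpha> \<bullet> \<beta>) / (\<beta> \<bullet> \<beta>) = 1 \<or> 2 * (\<beta> \<bullet> \<alpha>) / (\<alpha> \<bullet> \<alpha>) = 1"
proof -
  have \<alpha>\<alpha>: "0 < \<alpha> \<bullet> \<alpha>" and \<beta>\<beta>: "0 < \<beta> \<bullet> \<beta>"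
    using \<alpha> \<beta> zero_not_root by (metis inner_gt_zero_iff)+
  obtain m n :: int where m: "of_int m = 2 * (\<alpha> \<bullet> \<beta>) / (\<beta> \<bullet> \<beta>)"
    and n: "of_int n = 2 * (\<beta> \<bullet> \<alpha>) / (\<alpha> \<bullet> \<alpha>)"
    using cartan_integer[OF \<beta> \<alpha>] cartan_integer[OF \<alpha> \<beta>] by (metis Ints_cases)
  have "(0::real) < of_int m" "(0::real) < of_int n"
    unfolding m n using pos \<alpha>\<alpha> \<beta>\<beta> by (simp_all add: inner_commute)
  then have "0 < m" "0 < n"
    by simp_all
  have "of_int (m * n) = 4 * (\<alpha> \<bullet> \<beta>)\<^sup>2 / ((\<alpha> \<bullet> \<alpha>) * (\<beta> \<bullet> \<beta>))"
    using m n by (simp add: inner_commute power2_eq_square)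
  also have "\<dots> \<le> 4"
    using Cauchy_Schwarz_ineq[of \<alpha> \<beta>] mult_pos_pos[OF \<alpha>\<alpha> \<beta>\<beta>] by (simp add: pos_divide_le_eq)
  finally have "m * n \<le> 4"
    by linarith
  moreover have "\<not> (m = 2 \<and> n = 2)"
  proof
    assume "m = 2 \<and> n = 2"
    with m n \<alpha>\<alpha> \<beta>\<beta> have "\<alpha> \<bullet> \<beta> = \<beta> \<bullet> \<beta>" "\<alpha> \<bullet> \<beta> = \<alpha> \<bullet> \<alpha>"
      by (simp_all add: field_simps inner_commute)
    then have "(\<alpha> - \<beta>) \<bullet> (\<alpha> - \<beta>) = 0"
      by (simp add: inner_diff_left inner_diff_right inner_commute)
    with \<open>\<alpha> \<noteq> \<beta>\<close> show False
      by simp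
  qed
  ultimately have "m = 1 \<or> n = 1"
    using int_mult_le_four_cases[OF \<open>0 < m\<close> \<open>0 < n\<close>] by blast
  with m n show ?thesis
    by auto
qed

lemma diff_mem_roots_if_inner_pos:
  assumes \<alpha>: "\<alpha> \<in> R" and \<beta>: "\<beta> \<in> R" and "0 < \<alpha> \<bullet> \<beta>" "\<alpha> \<noteq> \<beta>"
  shows "\<alpha> - \<beta> \<in> R"
  using cartan_integer_eq_one_if_inner_pos[OF assms]
proof
  assume "2 * (\<alpha> \<bullet> \<beta>) / (\<beta> \<bullet> \<beta>) = 1"
  with reflection_mem_roots[OF \<beta> \<alpha>] show ?thesis
    by (simp only: scaleR_one)
next
  assume "2 * (\<beta> \<bullet> \<alpha>) / (\<alpha> \<bullet> \<alpha>) = 1"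
  with reflection_mem_roots[OF \<alpha> \<beta>] have "\<beta> - \<alpha> \<in> R"
    by (simp only: scaleR_one)
  then show ?thesis
    using uminus_mem_roots by fastforce
qed

lemma nat_comb_or_uminus_nat_comb:
  assumes "\<beta> \<in> R"
  shows "nat_comb P \<beta> \<or> nat_comb P (- \<beta>)"
proof -
  obtain c :: "'a \<Rightarrow> int" where c: "\<beta> = (\<Sum>\<alpha>\<in>P. of_int (c \<alpha>) *\<^sub>R \<alpha>)"
    and sign: "(\<forall>\<alpha>\<in>P. 0 \<le> c \<alpha>) \<or> (\<forall>\<alpha>\<in>P. c \<alpha> \<le> 0)"
    using root_coeffs_same_sign[OF assms] by blast
  from sign show ?thesis
  proof
    assume "\<forall>\<alpha>\<in>P. 0 \<le> c \<alpha>"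
    then have "\<beta> = (\<Sum>\<alpha>\<in>P. of_nat (nat (c \<alpha>)) *\<^sub>R \<alpha>)"
      unfolding c by (intro sum.cong) auto
    then have "nat_comb P \<beta>"
      unfolding nat_comb_def by (rule exI[of _ "\<lambda>\<alpha>. nat (c \<alpha>)"])
    then show ?thesis ..
  next
    assume "\<forall>\<alpha>\<in>P. c \<alpha> \<le> 0"
    then have "- \<beta> = (\<Sum>\<alpha>\<in>P. of_nat (nat (- c \<alpha>)) *\<^sub>R \<alpha>)"
      unfolding c by (simp add: sum_negf[symmetric])
    then have "nat_comb P (- \<beta>)"
      unfolding nat_comb_def by (rule exI[of _ "\<lambda>\<alpha>. nat (- c \<alpha>)"])
    then show ?thesis ..
  qed
qed

lemma pos_roots_subset: "pos_roots R P \<subseteq> R"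
  and nat_comb_pos_root: "\<beta> \<in> pos_roots R P \<Longrightarrow> nat_comb P \<beta>"
  by (auto simp: pos_roots_def)

lemma pos_root_ne_zero: "\<beta> \<in> pos_roots R P \<Longrightarrow> \<beta> \<noteq> 0"
  using pos_roots_subset zero_not_root by blast

lemma simple_roots_pos: "P \<subseteq> pos_roots R P"
  using simple_roots_subset nat_comb_mem[OF finite_simple_roots] by (auto simp: pos_roots_def)

lemma simple_roots_nonempty:
  assumes "\<beta> \<in> pos_roots R P"
  shows "P \<noteq> {}"
proof
  assume "P = {}"
  with nat_comb_pos_root[OF assms] have "\<beta> = 0"
    by (simp add: nat_comb_def)
  with pos_root_ne_zero[OF assms] show False
    by contradiction
qed

definition height_vector :: 'a where
  "height_vector = (SOME h. \<forall>\<alpha>\<in>P. \<alpha> \<bullet> h = 1)"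

lemma inner_height_vector: "\<alpha> \<in> P \<Longrightarrow> \<alpha> \<bullet> height_vector = 1"
  using someI_ex[OF exists_inner_eq_on_independent[OF independent_simple_roots, of "\<lambda>_. 1"]]
  unfolding height_vector_def by blast

lemma one_le_height_pos_root: "\<beta> \<in> pos_roots R P \<Longrightarrow> 1 \<le> \<beta> \<bullet> height_vector"
  using inner_ge_one_if_nat_comb[OF finite_simple_roots] nat_comb_pos_root pos_root_ne_zero
    inner_height_vector by simp

lemma size_le_height_sum_mset:
  "set_mset M \<subseteq> pos_roots R P \<Longrightarrow> real (size M) \<le> sum_mset M \<bullet> height_vector"
proof (induction M)
  case empty
  then show ?case
    by simp
next
  case (add \<beta> M)
  then have "1 \<le> \<beta> \<bullet> height_vector" "real (size M) \<le> sum_mset M \<bullet> height_vector"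
    using one_le_height_pos_root by auto
  then show ?case
    by (simp add: inner_add_left)
qed

lemma sum_mset_pos_roots_ne_zero:
  assumes "set_mset M \<subseteq> pos_roots R P" "M \<noteq> {#}"
  shows "sum_mset M \<noteq> 0"
proof
  assume "sum_mset M = 0"
  with size_le_height_sum_mset[OF assms(1)] have "size M = 0"
    by simp
  with assms(2) show False
    by simp
qed

lemma root_le_refl: "root_le P \<beta> \<beta>"
  by (simp add: root_le_def nat_comb_zero)

lemma root_le_trans: "root_le P \<alpha> \<beta> \<Longrightarrow> root_le P \<beta> \<gamma> \<Longrightarrow> root_le P \<alpha> \<gamma>"
  using nat_comb_add[of P "\<gamma> - \<beta>" "\<beta> - \<alpha>"] by (simp add: root_le_def)

lemma root_le_antisym:
  assumes "root_le P \<alpha> \<beta>" "root_le P \<beta> \<alpha>"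
  shows "\<alpha> = \<beta>"
proof (rule ccontr)
  assume "\<alpha> \<noteq> \<beta>"
  then have "1 \<le> (\<beta> - \<alpha>) \<bullet> height_vector"
    using assms(1) inner_ge_one_if_nat_comb[OF finite_simple_roots] inner_height_vector
    by (simp add: root_le_def)
  moreover have "0 \<le> (\<alpha> - \<beta>) \<bullet> height_vector"
    using assms(2) inner_nonneg_if_nat_comb[of P "\<alpha> - \<beta>" height_vector] inner_height_vector
    by (simp add: root_le_def)
  ultimately show False
    by (simp add: inner_diff_left)
qed

lemma root_le_if_diff_pos_root: "\<delta> - \<gamma> \<in> pos_roots R P \<Longrightarrow> root_le P \<gamma> \<delta>"
  by (simp add: root_le_def pos_roots_def)

lemma pos_roots_diff_cases:
  assumes "\<gamma> \<in> pos_roots R P" "\<delta> \<in> pos_roots R P" "0 < \<gamma> \<bullet> \<delta>" "\<gamma> \<noteq> \<delta>"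
  shows "\<gamma> - \<delta> \<in> pos_roots R P \<or> \<delta> - \<gamma> \<in> pos_roots R P"
proof -
  have "\<gamma> - \<delta> \<in> R"
    using diff_mem_roots_if_inner_pos assms pos_roots_subset by blast
  moreover from this have "\<delta> - \<gamma> \<in> R"
    using uminus_mem_roots by fastforce
  ultimately show ?thesis
    using nat_comb_or_uminus_nat_comb[of "\<gamma> - \<delta>"] by (auto simp: pos_roots_def)
qed

definition root_coeff :: "'a \<Rightarrow> 'a \<Rightarrow> nat" where
  "root_coeff \<beta> = (SOME c. \<beta> = (\<Sum>\<alpha>\<in>P. of_nat (c \<alpha>) *\<^sub>R \<alpha>))"

lemma sum_root_coeff:
  assumes "nat_comb P \<beta>"
  shows "(\<Sum>\<alpha>\<in>P. of_nat (root_coeff \<beta> \<alpha>) *\<^sub>R \<alpha>) = \<beta>"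
proof -
  have "\<beta> = (\<Sum>\<alpha>\<in>P. of_nat (root_coeff \<beta> \<alpha>) *\<^sub>R \<alpha>)"
    unfolding root_coeff_def using assms unfolding nat_comb_def by (rule someI_ex)
  then show ?thesis
    by (rule sym)
qed

lemma inner_eq_sum_root_coeff:
  assumes "nat_comb P \<beta>"
  shows "\<beta> \<bullet> h = (\<Sum>\<alpha>\<in>P. of_nat (root_coeff \<beta> \<alpha>) * (\<alpha> \<bullet> h))"
proof -
  have "\<beta> \<bullet> h = (\<Sum>\<alpha>\<in>P. of_nat (root_coeff \<beta> \<alpha>) *\<^sub>R \<alpha>) \<bullet> h"
    using sum_root_coeff[OF assms] by simp
  then show ?thesis
    by (simp add: inner_sum_left)
qed

lemma sum_scaleR_eq_sum_root_coeff:
  assumes "\<And>\<gamma>. \<gamma> \<in> G \<Longrightarrow> nat_comb P \<gamma>"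
  shows "(\<Sum>\<gamma>\<in>G. w \<gamma> *\<^sub>R \<gamma>) = (\<Sum>\<alpha>\<in>P. (\<Sum>\<gamma>\<in>G. w \<gamma> * of_nat (root_coeff \<gamma> \<alpha>)) *\<^sub>R \<alpha>)"
proof -
  have "w \<gamma> *\<^sub>R \<gamma> = (\<Sum>\<alpha>\<in>P. (w \<gamma> * of_nat (root_coeff \<gamma> \<alpha>)) *\<^sub>R \<alpha>)" if "\<gamma> \<in> G" for \<gamma>
  proof -
    have "w \<gamma> *\<^sub>R \<gamma> = w \<gamma> *\<^sub>R (\<Sum>\<alpha>\<in>P. of_nat (root_coeff \<gamma> \<alpha>) *\<^sub>R \<alpha>)"
      using sum_root_coeff assms that by simp
    then show ?thesis
      by (simp add: scaleR_sum_right)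
  qed
  then have "(\<Sum>\<gamma>\<in>G. w \<gamma> *\<^sub>R \<gamma>) = (\<Sum>\<gamma>\<in>G. \<Sum>\<alpha>\<in>P. (w \<gamma> * of_nat (root_coeff \<gamma> \<alpha>)) *\<^sub>R \<alpha>)"
    by (rule sum.cong[OF refl])
  also have "\<dots> = (\<Sum>\<alpha>\<in>P. (\<Sum>\<gamma>\<in>G. w \<gamma> * of_nat (root_coeff \<gamma> \<alpha>)) *\<^sub>R \<alpha>)"
    by (subst sum.swap) (simp add: scaleR_sum_left)
  finally show ?thesis .
qed

lemma coeff_eq_sum_root_coeff:
  assumes "\<And>\<gamma>. \<gamma> \<in> G \<Longrightarrow> nat_comb P \<gamma>" "(\<Sum>\<gamma>\<in>G. w \<gamma> *\<^sub>R \<gamma>) = (\<Sum>\<alpha>\<in>P. u \<alpha> *\<^sub>R \<alpha>)" "\<alpha> \<in> P"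
  shows "u \<alpha> = (\<Sum>\<gamma>\<in>G. w \<gamma> * of_nat (root_coeff \<gamma> \<alpha>))"
proof -
  have "(\<Sum>\<alpha>\<in>P. u \<alpha> *\<^sub>R \<alpha>) = (\<Sum>\<alpha>\<in>P. (\<Sum>\<gamma>\<in>G. w \<gamma> * of_nat (root_coeff \<gamma> \<alpha>)) *\<^sub>R \<alpha>)"
    using assms(2) sum_scaleR_eq_sum_root_coeff[OF assms(1)] by simp
  from independent_simple_roots finite_simple_roots this assms(3) show ?thesis
    by (rule scaleR_sum_eq_imp_eq_on_independent)
qed

lemma inner_diff_eq_sum_root_coeff:
  assumes "nat_comb P \<beta>" "nat_comb P \<beta>'"
  shows "\<beta> \<bullet> h - \<beta>' \<bullet> h =
    (\<Sum>\<alpha>\<in>P. (of_nat (root_coeff \<beta> \<alpha>) - of_nat (root_coeff \<beta>' \<alpha>)) * (\<alpha> \<bullet> h))"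
  using inner_eq_sum_root_coeff[OF assms(1)] inner_eq_sum_root_coeff[OF assms(2)]
  by (simp add: left_diff_distrib sum_subtractf)

end

section \<open>Antichains of positive roots\<close>

locale root_antichain = based_root_system +
  fixes \<Gamma> :: "'a set"
  assumes antichain: "antichain R P \<Gamma>"
begin

lemma antichain_subset_pos_roots: "\<Gamma> \<subseteq> pos_roots R P"
  and eq_if_root_le_antichain: "\<And>\<gamma> \<gamma>'. \<gamma> \<in> \<Gamma> \<Longrightarrow> \<gamma>' \<in> \<Gamma> \<Longrightarrow> root_le P \<gamma> \<gamma>' \<Longrightarrow> \<gamma> = \<gamma>'"
  using antichain unfolding antichain_def by auto

lemma nat_comb_antichain: "\<gamma> \<in> \<Gamma> \<Longrightarrow> nat_comb P \<gamma>"
  using antichain_subset_pos_roots nat_comb_pos_root by blast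

lemma finite_antichain: "finite \<Gamma>"
  using antichain_subset_pos_roots pos_roots_subset finite_roots
  by (rule finite_subset[OF order_trans])

definition lower_set :: "'a set" where
  "lower_set = {\<beta> \<in> pos_roots R P. \<exists>\<gamma>\<in>\<Gamma>. root_le P \<beta> \<gamma>}"

lemma antichain_subset_lower_set: "\<Gamma> \<subseteq> lower_set"
  using antichain_subset_pos_roots root_le_refl by (auto simp: lower_set_def)

lemma lower_set_subset_pos_roots: "lower_set \<subseteq> pos_roots R P"
  by (auto simp: lower_set_def)

lemma diff_mem_lower_set:
  assumes "\<delta> \<in> lower_set" "\<beta> \<in> pos_roots R P" "\<delta> - \<beta> \<in> pos_roots R P"
  shows "\<delta> - \<beta> \<in> lower_set"
proof -
  have "root_le P (\<delta> - \<beta>) \<delta>"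
    using assms(2) by (simp add: root_le_if_diff_pos_root)
  with assms(1,3) show ?thesis
    using root_le_trans by (auto simp: lower_set_def)
qed

lemma eq_if_root_le_lower_set:
  assumes "\<gamma> \<in> \<Gamma>" "\<delta> \<in> lower_set" "root_le P \<gamma> \<delta>"
  shows "\<gamma> = \<delta>"
proof -
  obtain \<gamma>' where \<gamma>': "\<gamma>' \<in> \<Gamma>" "root_le P \<delta> \<gamma>'"
    using assms(2) by (auto simp: lower_set_def)
  then have "\<gamma> = \<gamma>'"
    using eq_if_root_le_antichain assms(1,3) root_le_trans by blast
  with assms(3) \<gamma>'(2) show ?thesis
    using root_le_antisym by blast
qed

lemma antichain_ne_diff_lower_set:
  assumes "\<gamma> \<in> \<Gamma>" "\<delta> \<in> lower_set" "\<beta> \<in> pos_roots R P"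
  shows "\<gamma> \<noteq> \<delta> - \<beta>"
proof
  assume "\<gamma> = \<delta> - \<beta>"
  with assms(3) have "root_le P \<gamma> \<delta>"
    by (simp add: root_le_if_diff_pos_root)
  with assms(1,2) have "\<gamma> = \<delta>"
    by (rule eq_if_root_le_lower_set)
  with \<open>\<gamma> = \<delta> - \<beta>\<close> assms(3) show False
    using pos_root_ne_zero by simp
qed

definition balanced :: "'a multiset \<Rightarrow> 'a multiset \<Rightarrow> 'a multiset \<Rightarrow> bool" where
  "balanced A B V \<longleftrightarrow> set_mset A \<subseteq> \<Gamma> \<and> set_mset B \<subseteq> lower_set \<and> set_mset V \<subseteq> pos_roots R P \<and>
     sum_mset B = sum_mset A + sum_mset V"

lemma balancedI:
  assumes "balanced A B V"
    and "set_mset A' \<subseteq> \<Gamma>" "set_mset B' \<subseteq> lower_set" "set_mset V' \<subseteq> pos_roots R P"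
    and "sum_mset B' - sum_mset A' - sum_mset V' = sum_mset B - sum_mset A - sum_mset V"
  shows "balanced A' B' V'"
  using assms by (simp add: balanced_def diff_eq_eq add.commute)

lemma balanced_sets:
  assumes "balanced A B V"
  shows "set_mset A \<subseteq> pos_roots R P" "set_mset B \<subseteq> pos_roots R P" "set_mset V \<subseteq> pos_roots R P"
  using assms antichain_subset_pos_roots lower_set_subset_pos_roots by (auto simp: balanced_def)

lemma diff_pos_root_if_inner_pos:
  assumes "\<gamma> \<in> \<Gamma>" "\<delta> \<in> lower_set" "0 < \<gamma> \<bullet> \<delta>" "\<gamma> \<noteq> \<delta>"
  shows "\<gamma> - \<delta> \<in> pos_roots R P"
proof -
  have "\<delta> - \<gamma> \<notin> pos_roots R P"
    using assms(4) eq_if_root_le_lower_set[OF assms(1,2)] root_le_if_diff_pos_root by blast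
  moreover have "\<gamma> \<in> pos_roots R P" "\<delta> \<in> pos_roots R P"
    using assms(1,2) antichain_subset_pos_roots lower_set_subset_pos_roots by blast+
  ultimately show ?thesis
    using pos_roots_diff_cases[OF _ _ assms(3,4)] by blast
qed

lemma balanced_empty_imp_empty:
  assumes "balanced A {#} V"
  shows "A = {#}" "V = {#}"
proof -
  have "sum_mset (A + V) = 0"
    using assms by (simp add: balanced_def)
  moreover have "set_mset (A + V) \<subseteq> pos_roots R P"
    using balanced_sets[OF assms] by auto
  ultimately have "A + V = {#}"
    using sum_mset_pos_roots_ne_zero by (metis sum_mset.empty)
  then show "A = {#}" "V = {#}"
    by simp_all
qed

lemma size_bound_step_distinct_pair:
  assumes bal: "balanced A B V" and \<gamma>: "\<gamma> \<in># A" and \<delta>: "\<delta> \<in># B" and pos: "0 < \<gamma> \<bullet> \<delta>"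
    and "\<gamma> \<noteq> \<delta>"
    and IH: "\<And>A' B' V'. size A' + size B' + size V' < size A + size B + size V \<Longrightarrow>
      balanced A' B' V' \<Longrightarrow> size A' + of_bool (V' \<noteq> {#}) \<le> size B'"
  shows "size A < size B"
proof -
  obtain A' where A: "A = add_mset \<gamma> A'"
    using \<gamma> by (rule mset_add)
  obtain B' where B: "B = add_mset \<delta> B'"
    using \<delta> by (rule mset_add)
  have "\<gamma> \<in> \<Gamma>" "\<delta> \<in> lower_set"
    using bal by (auto simp: balanced_def A B)
  from diff_pos_root_if_inner_pos[OF this pos \<open>\<gamma> \<noteq> \<delta>\<close>]
  have "balanced A' B' (add_mset (\<gamma> - \<delta>) V)"
    by (intro balancedI[OF bal]) (use bal in \<open>auto simp: balanced_def A B algebra_simps\<close>)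
  from IH[OF _ this] show ?thesis
    by (simp add: A B)
qed

lemma size_bound_step_antichain_pair:
  assumes bal: "balanced A B V" and \<gamma>: "\<gamma> \<in># A" and \<delta>: "\<delta> \<in># B" and pos: "0 < \<gamma> \<bullet> \<delta>"
    and IH: "\<And>A' B' V'. size A' + size B' + size V' < size A + size B + size V \<Longrightarrow>
      balanced A' B' V' \<Longrightarrow> size A' + of_bool (V' \<noteq> {#}) \<le> size B'"
  shows "size A + of_bool (V \<noteq> {#}) \<le> size B"
proof (cases "\<gamma> = \<delta>")
  case True
  obtain A' where A: "A = add_mset \<gamma> A'"
    using \<gamma> by (rule mset_add)
  obtain B' where B: "B = add_mset \<delta> B'"
    using \<delta> by (rule mset_add)
  have "balanced A' B' V"
    by (rule balancedI[OF bal]) (use bal True in \<open>auto simp: balanced_def A B\<close>)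
  from IH[OF _ this] show ?thesis
    by (simp add: A B)
next
  case False
  from size_bound_step_distinct_pair[OF bal \<gamma> \<delta> pos False IH] show ?thesis
    by simp
qed

(* Cancelling \<beta> against \<delta> leaves a relation without V, for which the induction hypothesis
   only gives a non-strict bound; the strict bound needs one more pairing step. *)
lemma size_bound_step_single_root:
  assumes bal: "balanced A B V" and V: "V = {#\<beta>#}" and \<delta>: "\<delta> \<in># B"
    and \<delta>\<beta>: "\<delta> - \<beta> \<in> pos_roots R P"
    and IH: "\<And>A' B' V'. size A' + size B' + size V' < size A + size B + size V \<Longrightarrow>
      balanced A' B' V' \<Longrightarrow> size A' + of_bool (V' \<noteq> {#}) \<le> size B'"
  shows "size A + of_bool (V \<noteq> {#}) \<le> size B"
proof (cases "A = {#}")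
  case True
  with \<delta> V show ?thesis
    by (cases B) auto
next
  case False
  obtain B' where B: "B = add_mset \<delta> B'"
    using \<delta> by (rule mset_add)
  have \<beta>: "\<beta> \<in> pos_roots R P" and \<delta>_lower: "\<delta> \<in> lower_set"
    using bal by (auto simp: balanced_def V B)
  have bal': "balanced A (add_mset (\<delta> - \<beta>) B') {#}"
    by (rule balancedI[OF bal])
      (use bal diff_mem_lower_set[OF \<delta>_lower \<beta> \<delta>\<beta>] in \<open>auto simp: balanced_def V B algebra_simps\<close>)
  then have "sum_mset A = sum_mset (add_mset (\<delta> - \<beta>) B')"
    by (simp add: balanced_def)
  moreover have "sum_mset A \<noteq> 0"
    using balanced_sets(1)[OF bal] False by (rule sum_mset_pos_roots_ne_zero)
  ultimately obtain \<gamma> \<delta>' where \<gamma>: "\<gamma> \<in># A" and \<delta>': "\<delta>' \<in># add_mset (\<delta> - \<beta>) B'"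
    and pos: "0 < \<gamma> \<bullet> \<delta>'"
    using exists_inner_pos_if_sum_mset_eq by blast
  show ?thesis
  proof (cases "\<delta>' = \<delta> - \<beta>")
    case False
    with \<delta>' have "\<delta>' \<in># B"
      by (simp add: B)
    from bal \<gamma> this pos IH show ?thesis
      by (rule size_bound_step_antichain_pair)
  next
    case True
    have "\<gamma> \<in> \<Gamma>"
      using bal \<gamma> by (auto simp: balanced_def)
    with True \<delta>_lower \<beta> have "\<gamma> \<noteq> \<delta>'"
      by (simp add: antichain_ne_diff_lower_set)
    from bal' \<gamma> \<delta>' pos this have "size A < size (add_mset (\<delta> - \<beta>) B')"
      by (rule size_bound_step_distinct_pair) (use IH in \<open>simp add: B V\<close>)
    then show ?thesis
      by (simp add: B V)
  qed
qed

lemma size_bound_step_root_pair: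
  assumes bal: "balanced A B V" and \<beta>: "\<beta> \<in># V" and \<delta>: "\<delta> \<in># B" and pos: "0 < \<beta> \<bullet> \<delta>"
    and IH: "\<And>A' B' V'. size A' + size B' + size V' < size A + size B + size V \<Longrightarrow>
      balanced A' B' V' \<Longrightarrow> size A' + of_bool (V' \<noteq> {#}) \<le> size B'"
  shows "size A + of_bool (V \<noteq> {#}) \<le> size B"
proof -
  obtain V' where V: "V = add_mset \<beta> V'"
    using \<beta> by (rule mset_add)
  obtain B' where B: "B = add_mset \<delta> B'"
    using \<delta> by (rule mset_add)
  have \<beta>_pos: "\<beta> \<in> pos_roots R P" and \<delta>_pos: "\<delta> \<in> pos_roots R P" and \<delta>_lower: "\<delta> \<in> lower_set"
    using bal balanced_sets[OF bal] by (auto simp: balanced_def V B)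
  consider "\<beta> = \<delta>" | "\<beta> - \<delta> \<in> pos_roots R P" | "\<delta> - \<beta> \<in> pos_roots R P" "V' = {#}"
    | "\<delta> - \<beta> \<in> pos_roots R P" "V' \<noteq> {#}"
    using pos_roots_diff_cases[OF \<beta>_pos \<delta>_pos pos] by blast
  then show ?thesis
  proof cases
    case 1
    have "balanced A B' V'"
      by (rule balancedI[OF bal]) (use bal 1 in \<open>auto simp: balanced_def V B\<close>)
    from IH[OF _ this] show ?thesis
      by (simp add: V B)
  next
    case 2
    have "balanced A B' (add_mset (\<beta> - \<delta>) V')"
      by (rule balancedI[OF bal]) (use bal 2 in \<open>auto simp: balanced_def V B algebra_simps\<close>)
    from IH[OF _ this] show ?thesis
      by (simp add: V B)
  next
    case 3
    with V have "V = {#\<beta>#}"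
      by simp
    from bal this \<delta> 3(1) IH show ?thesis
      by (rule size_bound_step_single_root)
  next
    case 4
    have "balanced A (add_mset (\<delta> - \<beta>) B') V'"
      by (rule balancedI[OF bal])
        (use bal 4 diff_mem_lower_set[OF \<delta>_lower \<beta>_pos 4(1)] in
          \<open>auto simp: balanced_def V B algebra_simps\<close>)
    from IH[OF _ this] 4(2) show ?thesis
      by (simp add: V B)
  qed
qed

theorem balanced_size_bound:
  "balanced A B V \<Longrightarrow> size A + of_bool (V \<noteq> {#}) \<le> size B"
proof (induction "size A + size B + size V" arbitrary: A B V rule: less_induct)
  case less
  show ?case
  proof (cases "B = {#}")
    case True
    with balanced_empty_imp_empty less.prems show ?thesis
      by simp
  next
    case False
    have "sum_mset B = sum_mset (A + V)"
      using less.prems by (simp add: balanced_def)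
    moreover have "sum_mset B \<noteq> 0"
      using balanced_sets(2)[OF less.prems] False by (rule sum_mset_pos_roots_ne_zero)
    ultimately obtain \<delta> x where \<delta>: "\<delta> \<in># B" and x: "x \<in># A + V" and "0 < \<delta> \<bullet> x"
      using exists_inner_pos_if_sum_mset_eq by blast
    then have pos: "0 < x \<bullet> \<delta>"
      by (simp add: inner_commute)
    from x consider "x \<in># A" | "x \<in># V"
      by auto
    then show ?thesis
    proof cases
      case 1
      from less.prems this \<delta> pos less.hyps show ?thesis
        by (rule size_bound_step_antichain_pair)
    next
      case 2
      from less.prems this \<delta> pos less.hyps show ?thesis
        by (rule size_bound_step_root_pair)
    qed
  qed
qed

lemma integer_relation_trivial:
  fixes w c :: "'a \<Rightarrow> int"
  assumes sum_w: "(\<Sum>\<gamma>\<in>\<Gamma>. w \<gamma>) = 0" and c_nonneg: "\<forall>\<alpha>\<in>P. 0 \<le> c \<alpha>"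
    and eq: "(\<Sum>\<gamma>\<in>\<Gamma>. of_int (w \<gamma>) *\<^sub>R \<gamma>) = (\<Sum>\<alpha>\<in>P. of_int (c \<alpha>) *\<^sub>R \<alpha>)"
  shows "\<forall>\<alpha>\<in>P. c \<alpha> = 0"
proof -
  define A where "A = (\<Sum>\<gamma>\<in>\<Gamma>. replicate_mset (nat (- w \<gamma>)) \<gamma>)"
  define B where "B = (\<Sum>\<gamma>\<in>\<Gamma>. replicate_mset (nat (w \<gamma>)) \<gamma>)"
  define V where "V = (\<Sum>\<alpha>\<in>P. replicate_mset (nat (c \<alpha>)) \<alpha>)"
  have nat_parts: "real (nat k) - real (nat (- k)) = of_int k" for k :: int
    by (cases "0 \<le> k") simp_all
  have "sum_mset B - sum_mset A = (\<Sum>\<gamma>\<in>\<Gamma>. (real (nat (w \<gamma>)) - real (nat (- w \<gamma>))) *\<^sub>R \<gamma>)"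
    by (simp add: A_def B_def sum_mset_sum_replicate_mset scaleR_diff_left sum_subtractf)
  also have "\<dots> = (\<Sum>\<alpha>\<in>P. of_int (c \<alpha>) *\<^sub>R \<alpha>)"
    by (simp add: nat_parts eq)
  also have "\<dots> = sum_mset V"
    using c_nonneg by (auto simp: V_def sum_mset_sum_replicate_mset intro!: sum.cong)
  finally have "sum_mset B - sum_mset A = sum_mset V" .
  moreover have "set_mset A \<subseteq> \<Gamma>" "set_mset B \<subseteq> \<Gamma>" "set_mset V \<subseteq> P"
    unfolding A_def B_def V_def by (rule set_mset_sum_replicate_mset)+
  ultimately have "balanced A B V"
    using antichain_subset_lower_set simple_roots_pos
    by (auto simp: balanced_def diff_eq_eq add.commute)
  have "int (size B) - int (size A) = (\<Sum>\<gamma>\<in>\<Gamma>. int (nat (w \<gamma>)) - int (nat (- w \<gamma>)))"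
    by (simp add: A_def B_def size_sum_replicate_mset sum_subtractf)
  also have "\<dots> = (\<Sum>\<gamma>\<in>\<Gamma>. w \<gamma>)"
    by (intro sum.cong) auto
  finally have "size A = size B"
    using sum_w by simp
  with balanced_size_bound[OF \<open>balanced A B V\<close>] have "V = {#}"
    by (cases "V = {#}") simp_all
  then have "(\<Sum>\<alpha>\<in>P. nat (c \<alpha>)) = 0"
    using size_sum_replicate_mset[of "\<lambda>\<alpha>. nat (c \<alpha>)" P] unfolding V_def by simp
  then show ?thesis
    using c_nonneg finite_simple_roots by (simp add: order_antisym)
qed

lemma exists_integer_relation:
  fixes z u :: "'a \<Rightarrow> real"
  assumes sum_z: "(\<Sum>\<gamma>\<in>\<Gamma>. z \<gamma>) = 0" and eq: "(\<Sum>\<gamma>\<in>\<Gamma>. z \<gamma> *\<^sub>R \<gamma>) = (\<Sum>\<alpha>\<in>P. u \<alpha> *\<^sub>R \<alpha>)"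
  shows "\<exists>w c :: 'a \<Rightarrow> int. (\<Sum>\<gamma>\<in>\<Gamma>. w \<gamma>) = 0 \<and> (\<forall>\<alpha>\<in>P. sgn (of_int (c \<alpha>)) = sgn (u \<alpha>)) \<and>
    (\<Sum>\<gamma>\<in>\<Gamma>. of_int (w \<gamma>) *\<^sub>R \<gamma>) = (\<Sum>\<alpha>\<in>P. of_int (c \<alpha>) *\<^sub>R \<alpha>)"
proof -
  let ?m = "\<lambda>\<alpha> \<gamma>. real (root_coeff \<gamma> \<alpha>)"
  have u: "u \<alpha> = (\<Sum>\<gamma>\<in>\<Gamma>. ?m \<alpha> \<gamma> * z \<gamma>)" if "\<alpha> \<in> P" for \<alpha>
    using coeff_eq_sum_root_coeff[OF nat_comb_antichain eq that] by (simp add: mult.commute)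
  obtain w :: "'a \<Rightarrow> int" where
    w: "\<forall>f\<in>insert (\<lambda>_. 1) (?m ` P). sgn (\<Sum>\<gamma>\<in>\<Gamma>. f \<gamma> * of_int (w \<gamma>)) = sgn (\<Sum>\<gamma>\<in>\<Gamma>. f \<gamma> * z \<gamma>)"
    using integer_solution_same_sign[OF finite_antichain, of "insert (\<lambda>_. 1) (?m ` P)" z]
      finite_simple_roots
    by auto
  define c where "c \<alpha> = (\<Sum>\<gamma>\<in>\<Gamma>. int (root_coeff \<gamma> \<alpha>) * w \<gamma>)" for \<alpha>
  have "real_of_int (\<Sum>\<gamma>\<in>\<Gamma>. w \<gamma>) = 0"
    using w sum_z by (simp add: sgn_eq_0_iff)
  then have "(\<Sum>\<gamma>\<in>\<Gamma>. w \<gamma>) = 0"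
    by (simp only: of_int_eq_0_iff)
  moreover have "sgn (of_int (c \<alpha>)) = sgn (u \<alpha>)" if "\<alpha> \<in> P" for \<alpha>
    using w that u[OF that] by (simp add: c_def)
  moreover have "(\<Sum>\<gamma>\<in>\<Gamma>. of_int (w \<gamma>) *\<^sub>R \<gamma>) = (\<Sum>\<alpha>\<in>P. of_int (c \<alpha>) *\<^sub>R \<alpha>)"
    using sum_scaleR_eq_sum_root_coeff[of \<Gamma> "\<lambda>\<gamma>. of_int (w \<gamma>)"] nat_comb_antichain
    by (simp add: c_def mult.commute)
  ultimately show ?thesis
    by blast
qed

lemma real_relation_trivial:
  fixes z u :: "'a \<Rightarrow> real"
  assumes "(\<Sum>\<gamma>\<in>\<Gamma>. z \<gamma>) = 0" "\<forall>\<alpha>\<in>P. 0 \<le> u \<alpha>" "(\<Sum>\<gamma>\<in>\<Gamma>. z \<gamma> *\<^sub>R \<gamma>) = (\<Sum>\<alpha>\<in>P. u \<alpha> *\<^sub>R \<alpha>)"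
  shows "\<forall>\<alpha>\<in>P. u \<alpha> = 0"
proof -
  obtain w c :: "'a \<Rightarrow> int" where w: "(\<Sum>\<gamma>\<in>\<Gamma>. w \<gamma>) = 0"
    and c: "\<forall>\<alpha>\<in>P. sgn (of_int (c \<alpha>)) = sgn (u \<alpha>)"
    and eq: "(\<Sum>\<gamma>\<in>\<Gamma>. of_int (w \<gamma>) *\<^sub>R \<gamma>) = (\<Sum>\<alpha>\<in>P. of_int (c \<alpha>) *\<^sub>R \<alpha>)"
    using exists_integer_relation[OF assms(1,3)] by blast
  have "0 \<le> c \<alpha>" if "\<alpha> \<in> P" for \<alpha>
    using c assms(2) that by (force simp: sgn_if split: if_splits)
  then have "\<forall>\<alpha>\<in>P. c \<alpha> = 0"
    using integer_relation_trivial[OF w _ eq] by blast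
  with c show ?thesis
    by (simp add: sgn_eq_0_iff)
qed

lemma convex_hull_simple_roots_disjoint:
  "convex hull P \<inter> {\<Sum>\<gamma>\<in>\<Gamma>. z \<gamma> *\<^sub>R \<gamma> | z. (\<Sum>\<gamma>\<in>\<Gamma>. z \<gamma>) = 0} = {}"
proof (rule ccontr)
  assume "\<not> ?thesis"
  then obtain p where "p \<in> convex hull P" and p: "p \<in> {\<Sum>\<gamma>\<in>\<Gamma>. z \<gamma> *\<^sub>R \<gamma> | z. (\<Sum>\<gamma>\<in>\<Gamma>. z \<gamma>) = 0}"
    by blast
  then obtain u where u: "\<forall>\<alpha>\<in>P. 0 \<le> u \<alpha>" "sum u P = 1" "(\<Sum>\<alpha>\<in>P. u \<alpha> *\<^sub>R \<alpha>) = p"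
    by (auto simp: convex_hull_finite[OF finite_simple_roots])
  obtain z where z: "(\<Sum>\<gamma>\<in>\<Gamma>. z \<gamma>) = 0" "p = (\<Sum>\<gamma>\<in>\<Gamma>. z \<gamma> *\<^sub>R \<gamma>)"
    using p by blast
  have "\<forall>\<alpha>\<in>P. u \<alpha> = 0"
    using real_relation_trivial[OF z(1) u(1)] u(3) z(2) by simp
  with u(2) show False
    by simp
qed

lemma exists_functional_constant_on_antichain:
  assumes \<gamma>0: "\<gamma>0 \<in> \<Gamma>"
  shows "\<exists>a. (\<forall>\<alpha>\<in>P. 0 < a \<bullet> \<alpha>) \<and> (\<forall>\<gamma>\<in>\<Gamma>. a \<bullet> \<gamma> = a \<bullet> \<gamma>0)"
proof -
  define W where "W = {\<Sum>\<gamma>\<in>\<Gamma>. z \<gamma> *\<^sub>R \<gamma> | z. (\<Sum>\<gamma>\<in>\<Gamma>. z \<gamma>) = 0}"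
  have W: "subspace W"
    unfolding W_def by (rule subspace_zero_sum_combinations)
  have "P \<noteq> {}"
    using \<gamma>0 antichain_subset_pos_roots simple_roots_nonempty by blast
  then obtain a where a_hull: "\<forall>x\<in>convex hull P. 0 < a \<bullet> x" and a_W: "\<forall>w\<in>W. a \<bullet> w = 0"
    using separating_functional_compact_subspace[OF convex_convex_hull
        compact_convex_hull[OF finite_imp_compact[OF finite_simple_roots]] _ W]
      convex_hull_simple_roots_disjoint
    by (auto simp: W_def)
  have "a \<bullet> \<gamma> = a \<bullet> \<gamma>0" if "\<gamma> \<in> \<Gamma>" for \<gamma>
  proof -
    have "\<gamma> - \<gamma>0 \<in> W"
      unfolding W_def by (rule diff_mem_zero_sum_combinations[OF finite_antichain that \<gamma>0])
    with a_W have "a \<bullet> (\<gamma> - \<gamma>0) = 0"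
      by blast
    then show ?thesis
      by (simp add: inner_diff_right)
  qed
  moreover have "0 < a \<bullet> \<alpha>" if "\<alpha> \<in> P" for \<alpha>
    using a_hull hull_inc[OF that] by blast
  ultimately show ?thesis
    by blast
qed

lemma exists_positive_integer_weights:
  assumes \<gamma>0: "\<gamma>0 \<in> \<Gamma>" and a_pos: "\<forall>\<alpha>\<in>P. 0 < a \<bullet> \<alpha>" and a_const: "\<forall>\<gamma>\<in>\<Gamma>. a \<bullet> \<gamma> = a \<bullet> \<gamma>0"
  shows "\<exists>k :: 'a \<Rightarrow> int. (\<forall>\<alpha>\<in>P. 0 < k \<alpha>) \<and>
    (\<forall>\<gamma>\<in>\<Gamma>. (\<Sum>\<alpha>\<in>P. root_coeff \<gamma> \<alpha> * k \<alpha>) = (\<Sum>\<alpha>\<in>P. root_coeff \<gamma>0 \<alpha> * k \<alpha>))"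
proof -
  let ?m = "\<lambda>\<gamma> \<alpha>. real (root_coeff \<gamma> \<alpha>)"
  define F where "F = (\<lambda>\<gamma> \<alpha>. ?m \<gamma> \<alpha> - ?m \<gamma>0 \<alpha>) ` \<Gamma> \<union> (\<lambda>\<alpha> \<beta>. of_bool (\<beta> = \<alpha>)) ` P"
  have "finite F"
    using finite_antichain finite_simple_roots by (simp add: F_def)
  moreover have "\<forall>f\<in>F. \<forall>\<alpha>. f \<alpha> \<in> \<rat>"
    by (auto simp: F_def intro!: Rats_diff)
  ultimately obtain k :: "'a \<Rightarrow> int"
    where k: "\<forall>f\<in>F. sgn (\<Sum>\<alpha>\<in>P. f \<alpha> * of_int (k \<alpha>)) = sgn (\<Sum>\<alpha>\<in>P. f \<alpha> * (a \<bullet> \<alpha>))"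
    using integer_solution_same_sign[OF finite_simple_roots] by blast
  have "0 < k \<alpha>" if "\<alpha> \<in> P" for \<alpha>
  proof -
    have "(\<lambda>\<beta>. of_bool (\<beta> = \<alpha>)) \<in> F"
      using that by (simp add: F_def)
    from bspec[OF k this] a_pos that show ?thesis
      by (simp add: sum_of_bool_mult[OF finite_simple_roots that] sgn_1_pos)
  qed
  moreover have "(\<Sum>\<alpha>\<in>P. root_coeff \<gamma> \<alpha> * k \<alpha>) = (\<Sum>\<alpha>\<in>P. root_coeff \<gamma>0 \<alpha> * k \<alpha>)" if "\<gamma> \<in> \<Gamma>" for \<gamma>
  proof -
    have "(\<lambda>\<alpha>. ?m \<gamma> \<alpha> - ?m \<gamma>0 \<alpha>) \<in> F"
      using that by (simp add: F_def)
    from bspec[OF k this] have "sgn (\<Sum>\<alpha>\<in>P. (?m \<gamma> \<alpha> - ?m \<gamma>0 \<alpha>) * of_int (k \<alpha>)) =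
        sgn (\<Sum>\<alpha>\<in>P. (?m \<gamma> \<alpha> - ?m \<gamma>0 \<alpha>) * (a \<bullet> \<alpha>))"
      by simp
    also have "(\<Sum>\<alpha>\<in>P. (?m \<gamma> \<alpha> - ?m \<gamma>0 \<alpha>) * (a \<bullet> \<alpha>)) = 0"
      using inner_diff_eq_sum_root_coeff[OF nat_comb_antichain[OF that] nat_comb_antichain[OF \<gamma>0],
          of a, symmetric] a_const that
      by (simp add: inner_commute[of a])
    finally have "(\<Sum>\<alpha>\<in>P. (?m \<gamma> \<alpha> - ?m \<gamma>0 \<alpha>) * of_int (k \<alpha>)) = 0"
      by (simp add: sgn_eq_0_iff)
    then have "real_of_int (\<Sum>\<alpha>\<in>P. root_coeff \<gamma> \<alpha> * k \<alpha>) = of_int (\<Sum>\<alpha>\<in>P. root_coeff \<gamma>0 \<alpha> * k \<alpha>)"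
      by (simp add: left_diff_distrib sum_subtractf)
    then show ?thesis
      by (simp only: of_int_eq_iff)
  qed
  ultimately show ?thesis
    by blast
qed

theorem exists_integral_grading:
  assumes "\<Gamma> \<noteq> {}"
  shows "\<exists>H. \<exists>n::nat. 0 < n \<and> (\<forall>\<alpha>\<in>P. \<exists>k::nat. 0 < k \<and> \<alpha> \<bullet> H = real k) \<and> (\<forall>\<gamma>\<in>\<Gamma>. \<gamma> \<bullet> H = real n)"
proof -
  obtain \<gamma>0 where \<gamma>0: "\<gamma>0 \<in> \<Gamma>"
    using assms by blast
  obtain k :: "'a \<Rightarrow> int" where k_pos: "\<forall>\<alpha>\<in>P. 0 < k \<alpha>"
    and k_const: "\<forall>\<gamma>\<in>\<Gamma>. (\<Sum>\<alpha>\<in>P. root_coeff \<gamma> \<alpha> * k \<alpha>) = (\<Sum>\<alpha>\<in>P. root_coeff \<gamma>0 \<alpha> * k \<alpha>)"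
    using exists_functional_constant_on_antichain[OF \<gamma>0] exists_positive_integer_weights[OF \<gamma>0]
    by blast
  obtain H where H: "\<forall>\<alpha>\<in>P. \<alpha> \<bullet> H = of_int (k \<alpha>)"
    using exists_inner_eq_on_independent[OF independent_simple_roots, of "\<lambda>\<alpha>. of_int (k \<alpha>)"]
    by blast
  have \<gamma>H: "\<gamma> \<bullet> H = of_int (\<Sum>\<alpha>\<in>P. root_coeff \<gamma> \<alpha> * k \<alpha>)" if "\<gamma> \<in> \<Gamma>" for \<gamma>
    using inner_eq_sum_root_coeff[OF nat_comb_antichain[OF that], of H] H by simp
  define s where "s = (\<Sum>\<alpha>\<in>P. root_coeff \<gamma>0 \<alpha> * k \<alpha>)"
  have "1 \<le> \<gamma>0 \<bullet> H"
    using inner_ge_one_if_nat_comb[OF finite_simple_roots nat_comb_antichain[OF \<gamma>0]]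
      pos_root_ne_zero antichain_subset_pos_roots \<gamma>0 H k_pos by force
  moreover have "\<gamma>0 \<bullet> H = of_int s"
    unfolding s_def by (rule \<gamma>H[OF \<gamma>0])
  ultimately have n: "\<gamma>0 \<bullet> H = real (nat s)" "0 < nat s"
    by simp_all
  have "\<exists>k::nat. 0 < k \<and> \<alpha> \<bullet> H = real k" if "\<alpha> \<in> P" for \<alpha>
  proof -
    have "0 < k \<alpha>"
      using k_pos that by blast
    then show ?thesis
      using H that by (intro exI[of _ "nat (k \<alpha>)"]) simp
  qed
  moreover have "\<gamma> \<bullet> H = real (nat s)" if "\<gamma> \<in> \<Gamma>" for \<gamma>
  proof -
    have "\<gamma> \<bullet> H = \<gamma>0 \<bullet> H"
      by (simp only: \<gamma>H[OF that] \<gamma>H[OF \<gamma>0] k_const[rule_format, OF that])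
    with n(1) show ?thesis
      by simp
  qed
  ultimately show ?thesis
    using n(2) by blast
qed

end

theorem theorem4p1:
  fixes R P \<Gamma> :: "'a::euclidean_space set"
  assumes "root_system R" and "is_base R P"
    and "antichain R P \<Gamma>" and "\<Gamma> \<noteq> {}"
  shows "\<exists>H::'a. \<exists>n::nat. n > 0 \<and>
           (\<forall>\<alpha>\<in>P. \<exists>k::nat. k > 0 \<and> \<alpha> \<bullet> H = real k) \<and>
           (\<forall>\<gamma>\<in>\<Gamma>. \<gamma> \<bullet> H = real n)"
proof -
  interpret root_antichain R P \<Gamma>
    using assms(1-3) by unfold_locales
  show ?thesis
    using exists_integral_grading[OF assms(4)] by blast
qed

end
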